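(* $\mathfrak{U}(\mathbb{R})$ is a hyperfinite dimensional vector space over $\mathbb{R}^*$, and $\dim\mathfrak{U}(\mathbb{R})\le \ell\cdot\dim\widetilde{\mathcal{C}^1(\mathbb{R})}$.
   Context: Framework (Λ-limits / nonstandard analysis): let $\mathfrak{X}=\mathcal{P}_{fin}(\mathfrak{F}(\mathbb{R},\mathbb{R}))$ be the set of finite sets of real functions on $\mathbb{R}$, directed by inclusion. $\mathbb{R}^*\supset\mathbb{R}$ is a non-Archimedean ordered field whose elements are Λ-limits of nets $\varphi:\mathfrak{X}\to\mathbb{R}$; Λ-limits of nets of sets/functions give internal sets/functions; natural extensions $E^*$, $f^*$ are Λ-limits of constant nets; hyperfinite sets/sums/dimensions are Λ-limits of finite ones. For $\lambda\in\mathfrak{X}$ let $V_\lambda$ be the span of $\lambda$. An internal function $u=\lim_{\lambda\uparrow\Lambda}u_\lambda$ is an ultrafunction if $u_\lambda\in V_\lambda$ for all $\lambda$; for a vector space $W$ of real functions, $\widetilde{W}=W^*\cap\{\text{ultrafunctions}\}$ (a hyperfinite dimensional space). Grid: fix a positive infinite $\beta\in\mathbb{R}^*$ and a hyperfinite set $\Gamma=\{\gamma_0<\dots<\gamma_\ell\}\subset\mathbb{R}^*$ ($\ell$ hypernatural) with $\gamma_0=-\beta$, $\gamma_\ell=\beta$, $0<\gamma_{j+1}-\gamma_j<\eta$ for a fixed infinitesimal $\eta$, and $\mathbb{R}\subseteq\Gamma$. For $j=0,\dots,\ell-1$, $\mathbb{I}_j=(\gamma_j,\gamma_{j+1})_{\mathbb{R}^*}$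 and $\chi_j$ is its characteristic function. $\mathfrak{U}(\mathbb{R})$ is the set of functions $u:[-\beta,\beta]\to\mathbb{R}^*$ representable as an internal hyperfinite sum $u=\sum_{j=0}^{\ell-1}v_j\chi_j$ with each $v_j\in\widetilde{\mathcal{C}^1(\mathbb{R})}$. *)

theory Defs
  imports "HOL-Analysis.Analysis" "HOL-Library.Function_Algebras"
begin

text \<open>Lambda-theory encoded via nets indexed by
  lambda in X = P_fin(F(R,R)); an index is a set of real functions.
  Lambda-limits are taken along a fine ultrafilter F on such indices:
  an internal object is a net, and a property of a Lambda-limit holds iff it
  holds eventually along F (Los).\<close>

type_synonym idx = "(real \<Rightarrow> real) set"

definition Lambda_ultrafilter :: "idx filter \<Rightarrow> bool" where
  "Lambda_ultrafilter F \<longleftrightarrow>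
     F \<noteq> bot \<and>
     (\<forall>P. eventually P F \<or> eventually (\<lambda>l. \<not> P l) F) \<and>
     eventually finite F \<and>
     (\<forall>a. finite a \<longrightarrow> eventually (\<lambda>l. a \<subseteq> l) F)"

definition fscale :: "real \<Rightarrow> (real \<Rightarrow> real) \<Rightarrow> (real \<Rightarrow> real)" where
  "fscale c f = (\<lambda>x. c * f x)"

definition Vspan :: "idx \<Rightarrow> (real \<Rightarrow> real) set" where
  "Vspan l = module.span fscale l"

definition C1_fun :: "(real \<Rightarrow> real) set" where
  "C1_fun = {f. f C1_differentiable_on UNIV}"

text \<open>The net whose Lambda-limit is the ultrafunction space of C^1(R):
  W* intersected with ultrafunctions = lim (W \<inter> V_lambda).\<close>
definition C1_tilde :: "idx \<Rightarrow> (real \<Rightarrow> real) set" where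
  "C1_tilde l = C1_fun \<inter> Vspan l"

text \<open>The grid: beta positive infinite, eta positive infinitesimal,
  Gamma = {gam 0 < ... < gam ell} with gam 0 = -beta, gam ell = beta,
  gaps in (0, eta), and R contained in Gamma.\<close>
definition is_grid ::
  "idx filter \<Rightarrow> (idx \<Rightarrow> real) \<Rightarrow> (idx \<Rightarrow> real) \<Rightarrow> (idx \<Rightarrow> nat) \<Rightarrow> (idx \<Rightarrow> nat \<Rightarrow> real) \<Rightarrow> bool"
where
  "is_grid F beta eta ell gam \<longleftrightarrow>
     (\<forall>r::real. eventually (\<lambda>l. r < beta l) F) \<and>
     (\<forall>r::real. r > 0 \<longrightarrow> eventually (\<lambda>l. 0 < eta l \<and> eta l < r) F) \<and>
     eventually (\<lambda>l. gam l 0 = - beta l \<and> gam l (ell l) = beta l \<and>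
        (\<forall>j < ell l. 0 < gam l (Suc j) - gam l j \<and> gam l (Suc j) - gam l j < eta l)) F \<and>
     (\<forall>r::real. eventually (\<lambda>l. r \<in> gam l ` {0..ell l}) F)"

text \<open>The net whose Lambda-limit is U(R): functions on [-beta,beta]
  (extended by 0 outside) of the form sum_{j<ell} v_j chi_j with v_j in C1_tilde.\<close>
definition Ufrak ::
  "(idx \<Rightarrow> real) \<Rightarrow> (idx \<Rightarrow> nat) \<Rightarrow> (idx \<Rightarrow> nat \<Rightarrow> real) \<Rightarrow> idx \<Rightarrow> (real \<Rightarrow> real) set"
where
  "Ufrak beta ell gam l =
     {u. \<exists>v. (\<forall>j < ell l. v j \<in> C1_tilde l) \<and>
           u = (\<lambda>x. if x \<in> {- beta l .. beta l}
                     then (\<Sum>j < ell l. v j x * indicator {gam l j <..< gam l (Suc j)} x)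
                     else 0)}"

text \<open>An internal set S = lim S_lambda is a hyperfinite dimensional vector space
  over R* iff eventually S_lambda is a finite dimensional linear subspace;
  its (hypernatural) dimension is lim dim S_lambda.\<close>
definition hyperfinite_dim_space :: "idx filter \<Rightarrow> (idx \<Rightarrow> (real \<Rightarrow> real) set) \<Rightarrow> bool" where
  "hyperfinite_dim_space F S \<longleftrightarrow>
     eventually (\<lambda>l. module.subspace fscale (S l) \<and>
                     (\<exists>B. finite B \<and> S l \<subseteq> module.span fscale B)) F"

definition hdim :: "(idx \<Rightarrow> (real \<Rightarrow> real) set) \<Rightarrow> idx \<Rightarrow> nat" where
  "hdim S l = vector_space.dim fscale (S l)"

definition hnat_le :: "idx filter \<Rightarrow> (idx \<Rightarrow> nat) \<Rightarrow> (idx \<Rightarrow> nat) \<Rightarrow> bool" where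
  "hnat_le F a b \<longleftrightarrow> eventually (\<lambda>l. a l \<le> b l) F"

end

theory Submission
  imports Defs
begin

text \<open>Each element of \<open>\<UU>(\<real>)\<close> is a sum \<open>\<Sum>\<^sub>j\<^sub><\<^sub>\<ell> T\<^sub>j v\<^sub>j\<close> with \<open>v\<^sub>j\<close> in the
  ultrafunction space of \<open>C\<^sup>1\<close>, where the cut-off \<open>T\<^sub>j v = v \<chi>\<^sub>j\<close> (restricted to \<open>[-\<beta>,\<beta>]\<close>)
  is linear. Sums of linear images of a subspace form a subspace, spanned by the \<open>\<ell> \<cdot> |B|\<close>
  functions \<open>T\<^sub>j b\<close> for a basis \<open>B\<close>. By Los' theorem it suffices to argue at each index \<open>\<lambda>\<close>,
  and for the eventually finite \<open>\<lambda>\<close> the space \<open>C\<^sup>1 \<inter> V\<^sub>\<lambda>\<close> is finite dimensional.\<close>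

context vector_space_pair
begin

lemma subspace_sums_of_images:
  fixes n :: nat
  assumes lin: "\<And>j. j < n \<Longrightarrow> Vector_Spaces.linear s1 s2 (T j)"
    and C: "vs1.subspace C"
  shows "vs2.subspace {\<Sum>j<n. T j (v j) | v. \<forall>j<n. v j \<in> C}"
proof (rule vs2.subspaceI)
  have "(\<Sum>j<n. T j 0) = 0"
    by (intro sum.neutral) (simp add: lin linear_0)
  then show "0 \<in> {\<Sum>j<n. T j (v j) | v. \<forall>j<n. v j \<in> C}"
    using vs1.subspace_0[OF C] by (intro CollectI exI[of _ "\<lambda>_. 0"]) auto
next
  fix x y assume "x \<in> {\<Sum>j<n. T j (v j) | v. \<forall>j<n. v j \<in> C}"
    and "y \<in> {\<Sum>j<n. T j (v j) | v. \<forall>j<n. v j \<in> C}"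
  then obtain v w where v: "\<forall>j<n. v j \<in> C" "x = (\<Sum>j<n. T j (v j))"
    and w: "\<forall>j<n. w j \<in> C" "y = (\<Sum>j<n. T j (w j))"
    by blast
  have "x + y = (\<Sum>j<n. T j (v j + w j))"
    unfolding v(2) w(2) sum.distrib[symmetric] by (intro sum.cong) (simp_all add: lin linear_add)
  moreover have "\<forall>j<n. v j + w j \<in> C"
    using v(1) w(1) vs1.subspace_add[OF C] by blast
  ultimately show "x + y \<in> {\<Sum>j<n. T j (v j) | v. \<forall>j<n. v j \<in> C}"
    by (intro CollectI exI[of _ "\<lambda>j. v j + w j"]) simp
next
  fix c x assume "x \<in> {\<Sum>j<n. T j (v j) | v. \<forall>j<n. v j \<in> C}"
  then obtain v where v: "\<forall>j<n. v j \<in> C" "x = (\<Sum>j<n. T j (v j))"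
    by blast
  have "c *b x = (\<Sum>j<n. T j (c *a v j))"
    unfolding v(2) vs2.scale_sum_right by (intro sum.cong) (simp_all add: lin linear_scale)
  moreover have "\<forall>j<n. c *a v j \<in> C"
    using v(1) vs1.subspace_scale[OF C] by blast
  ultimately show "c *b x \<in> {\<Sum>j<n. T j (v j) | v. \<forall>j<n. v j \<in> C}"
    by (intro CollectI exI[of _ "\<lambda>j. c *a v j"]) simp
qed

lemma sums_of_images_subset_span:
  fixes n :: nat
  assumes lin: "\<And>j. j < n \<Longrightarrow> Vector_Spaces.linear s1 s2 (T j)"
    and C: "C \<subseteq> vs1.span B"
  shows "{\<Sum>j<n. T j (v j) | v. \<forall>j<n. v j \<in> C} \<subseteq> vs2.span (\<Union>j<n. T j ` B)"
proof clarify
  fix v assume v: "\<forall>j<n. v j \<in> C"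
  show "(\<Sum>j<n. T j (v j)) \<in> vs2.span (\<Union>j<n. T j ` B)"
  proof (rule vs2.span_sum)
    fix j assume j: "j \<in> {..<n}"
    then have "T j (v j) \<in> vs2.span (T j ` B)"
      using v C linear_span_image[OF lin] by blast
    also have "\<dots> \<subseteq> vs2.span (\<Union>j<n. T j ` B)"
      using j by (intro vs2.span_mono) blast
    finally show "T j (v j) \<in> vs2.span (\<Union>j<n. T j ` B)" .
  qed
qed

lemma sums_of_images_finite_span:
  fixes n :: nat
  assumes lin: "\<And>j. j < n \<Longrightarrow> Vector_Spaces.linear s1 s2 (T j)"
    and C: "C \<subseteq> vs1.span A" "finite A"
  shows "\<exists>B. finite B \<and> {\<Sum>j<n. T j (v j) | v. \<forall>j<n. v j \<in> C} \<subseteq> vs2.span B"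
proof (intro exI conjI)
  show "finite (\<Union>j<n. T j ` A)"
    using C(2) by simp
  show "{\<Sum>j<n. T j (v j) | v. \<forall>j<n. v j \<in> C} \<subseteq> vs2.span (\<Union>j<n. T j ` A)"
    by (rule sums_of_images_subset_span[OF lin C(1)])
qed

lemma dim_sums_of_images_le:
  fixes n :: nat
  assumes lin: "\<And>j. j < n \<Longrightarrow> Vector_Spaces.linear s1 s2 (T j)"
    and C: "C \<subseteq> vs1.span A" "finite A"
  shows "vs2.dim {\<Sum>j<n. T j (v j) | v. \<forall>j<n. v j \<in> C} \<le> n * vs1.dim C"
proof -
  obtain B where B: "B \<subseteq> C" "vs1.independent B" "C \<subseteq> vs1.span B" "card B = vs1.dim C"
    using vs1.basis_exists by blast
  have "finite B"
    using vs1.independent_span_bound[OF C(2) B(2)] B(1) C(1) by blast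
  have "vs2.dim {\<Sum>j<n. T j (v j) | v. \<forall>j<n. v j \<in> C} \<le> card (\<Union>j<n. T j ` B)"
    using \<open>finite B\<close> by (intro vs2.dim_le_card sums_of_images_subset_span[OF lin B(3)]) auto
  also have "\<dots> \<le> (\<Sum>j<n. card (T j ` B))"
    by (rule card_UN_le) simp
  also have "\<dots> \<le> (\<Sum>j<n. card B)"
    by (intro sum_mono card_image_le \<open>finite B\<close>)
  finally show ?thesis
    using B(4) by simp
qed

end

interpretation FV: vector_space fscale
  by unfold_locales (auto simp: fscale_def algebra_simps fun_eq_iff)

interpretation FVP: vector_space_pair fscale fscale ..

definition cutoff :: "real set \<Rightarrow> real set \<Rightarrow> (real \<Rightarrow> real) \<Rightarrow> real \<Rightarrow> real" where
  "cutoff I D w = (\<lambda>x. if x \<in> I then w x * indicator D x else 0)"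

lemma linear_cutoff: "Vector_Spaces.linear fscale fscale (cutoff I D)"
  unfolding Vector_Spaces.linear_iff
  by (auto simp: FV.vector_space_axioms cutoff_def fscale_def fun_eq_iff algebra_simps)

lemma Ufrak_eq_sums_of_cutoffs:
  "Ufrak beta ell gam l =
     {\<Sum>j<ell l. cutoff {- beta l .. beta l} {gam l j <..< gam l (Suc j)} (v j) | v.
        \<forall>j<ell l. v j \<in> C1_tilde l}"
proof -
  have sum_apply: "(\<Sum>j\<in>A. f j) x = (\<Sum>j\<in>A. f j x)"
    for A :: "nat set" and f :: "nat \<Rightarrow> real \<Rightarrow> real" and x
    by (induction A rule: infinite_finite_induct) auto
  have sum_cutoff: "(\<Sum>j<n. cutoff I (D j) (v j)) =
        (\<lambda>x. if x \<in> I then (\<Sum>j<n. v j x * indicator (D j) x) else 0)"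
    for n I and D :: "nat \<Rightarrow> real set" and v
    by (auto simp: fun_eq_iff sum_apply cutoff_def)
  show ?thesis
    unfolding Ufrak_def sum_cutoff by blast
qed

lemma C1_subspace: "FV.subspace C1_fun"
  unfolding C1_fun_def FV.subspace_def
  by (simp add: zero_fun_def plus_fun_def fscale_def)

lemma C1_tilde_subspace: "FV.subspace (C1_tilde l)"
  unfolding C1_tilde_def Vspan_def by (intro FV.subspace_inter C1_subspace FV.subspace_span)

lemma C1_tilde_subset_span: "C1_tilde l \<subseteq> FV.span l"
  unfolding C1_tilde_def Vspan_def by blast

theorem mainTheorem2:
  fixes F :: "idx filter"
    and beta eta :: "idx \<Rightarrow> real"
    and ell :: "idx \<Rightarrow> nat"
    and gam :: "idx \<Rightarrow> nat \<Rightarrow> real"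
  assumes "Lambda_ultrafilter F"
    and "is_grid F beta eta ell gam"
  shows "hyperfinite_dim_space F (Ufrak beta ell gam)
         \<and> hnat_le F (hdim (Ufrak beta ell gam)) (\<lambda>l. ell l * hdim C1_tilde l)"
proof -
  note sums = Ufrak_eq_sums_of_cutoffs[of beta ell gam] and lin = linear_cutoff
  have "FV.subspace (Ufrak beta ell gam l)" for l
    unfolding sums by (intro FVP.subspace_sums_of_images lin C1_tilde_subspace)
  moreover have "\<exists>B. finite B \<and> Ufrak beta ell gam l \<subseteq> FV.span B" if "finite l" for l
    unfolding sums by (rule FVP.sums_of_images_finite_span[OF lin C1_tilde_subset_span that])
  moreover have "hdim (Ufrak beta ell gam) l \<le> ell l * hdim C1_tilde l" if "finite l" for l
    unfolding hdim_def sums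
    by (rule FVP.dim_sums_of_images_le[OF lin C1_tilde_subset_span that])
  moreover have "eventually finite F"
    using assms(1) unfolding Lambda_ultrafilter_def by blast
  ultimately show ?thesis
    unfolding hyperfinite_dim_space_def hnat_le_def
    by (auto elim: eventually_mono)
qed

end
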